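(* Let $n\geq 8$ and let $x,y\in V(K_n)$ be distinct. Then in the Waiter-Client game on $K_n$, within $n$ rounds Waiter can force Client to build a red Hamilton path between $x$ and $y$.
   Context: Waiter-Client game on $K_n$: in each round Waiter offers two free edges of $K_n$, Client colors one of them red and the other becomes blue. *)

theory Defs
  imports Main
begin

definition Kn_edges :: "nat \<Rightarrow> nat set set" where
  "Kn_edges n = {{u, v} | u v. u < n \<and> v < n \<and> u \<noteq> v}"

definition free_edges :: "nat \<Rightarrow> nat set set \<Rightarrow> nat set set \<Rightarrow> nat set set" where
  "free_edges n R B = Kn_edges n - (R \<union> B)"

text \<open>In each round Waiter offers two distinct free edges;
  Client colours one red and the other becomes blue.\<close>
fun waiter_forces :: "nat \<Rightarrow> (nat set set \<Rightarrow> bool) \<Rightarrow> nat \<Rightarrow> nat set set \<Rightarrow> nat set set \<Rightarrow> bool" where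
  "waiter_forces n P 0 R B = P R"
| "waiter_forces n P (Suc k) R B =
     (P R \<or> (\<exists>e1 e2. e1 \<noteq> e2 \<and> e1 \<in> free_edges n R B \<and> e2 \<in> free_edges n R B \<and>
        waiter_forces n P k (insert e1 R) (insert e2 B) \<and>
        waiter_forces n P k (insert e2 R) (insert e1 B)))"

definition ham_path_between :: "nat \<Rightarrow> nat set set \<Rightarrow> nat \<Rightarrow> nat \<Rightarrow> bool" where
  "ham_path_between n R x y \<longleftrightarrow>
     (\<exists>vs. distinct vs \<and> set vs = {0..<n} \<and> hd vs = x \<and> last vs = y \<and>
        (\<forall>i. Suc i < length vs \<longrightarrow> {vs ! i, vs ! Suc i} \<in> R))"

end

theory Submission
  imports Defs
begin

(* Waiter grows a red path from x greedily: offering the two edges joining the current endpoint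
   to two untouched vertices, whichever Client takes extends the path by one vertex per round.
   When six vertices besides y are left, the endpoint, these six vertices and y span an untouched
   K_8, and in K_8 Waiter forces a red Hamilton path between two given vertices within 8 rounds.
   The last fact is certified by an explicit strategy tree checked by evaluation. In total
   Waiter uses (n - 8) + 8 = n rounds. *)

lemma ham_path_between_iff:
  "ham_path_between n R x y \<longleftrightarrow>
     (\<exists>vs. distinct vs \<and> set vs = {0..<n} \<and> hd vs = x \<and> last vs = y \<and>
        successively (\<lambda>a b. {a, b} \<in> R) vs)"
  unfolding ham_path_between_def successively_conv_nth ..

lemma ham_path_between_append:
  assumes "distinct ps" "distinct (last ps # qs)" "ps \<noteq> []"
    and "set ps \<inter> set qs = {}" "set ps \<union> set qs = {0..<n}"
    and "successively (\<lambda>a b. {a, b} \<in> R) ps" "successively (\<lambda>a b. {a, b} \<in> R) (last ps # qs)"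
  shows "ham_path_between n R (hd ps) (last (last ps # qs))"
  unfolding ham_path_between_iff
proof (intro exI conjI)
  show "distinct (ps @ qs)" "set (ps @ qs) = {0..<n}" "hd (ps @ qs) = hd ps"
    using assms(1-5) by auto
  show "last (ps @ qs) = last (last ps # qs)"
    by (cases "qs = []") auto
  show "successively (\<lambda>a b. {a, b} \<in> R) (ps @ qs)"
    using assms(3,6,7) by (auto simp: successively_append_iff successively_Cons)
qed

lemma waiter_forces_if_holds: "P R \<Longrightarrow> waiter_forces n P k R B"
  by (cases k) auto

definition uncoloured_on :: "nat set set \<Rightarrow> nat set set \<Rightarrow> nat set \<Rightarrow> bool" where
  "uncoloured_on R B U \<longleftrightarrow> (\<forall>a\<in>U. \<forall>b\<in>U. a \<noteq> b \<longrightarrow> {a, b} \<notin> R \<union> B)"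

lemma free_edges_if_uncoloured_on:
  assumes "uncoloured_on R B U" "U \<subseteq> {0..<n}" "a \<in> U" "b \<in> U" "a \<noteq> b"
  shows "{a, b} \<in> free_edges n R B"
proof -
  have "{a, b} \<in> Kn_edges n"
    unfolding Kn_edges_def using assms(2-5) by (intro CollectI exI conjI refl) auto
  moreover have "{a, b} \<notin> R \<union> B"
    using assms(1,3-5) unfolding uncoloured_on_def by blast
  ultimately show ?thesis
    unfolding free_edges_def by blast
qed

lemma free_edges_insert:
  "free_edges n (insert e1 R) (insert e2 B) = free_edges n R B - {e1, e2}"
  unfolding free_edges_def by blast

lemma free_edges_subset: "free_edges n R B \<subseteq> Kn_edges n"
  unfolding free_edges_def by blast

lemma inj_on_image_Kn_edges:
  assumes "inj_on f {0..<m}"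
  shows "inj_on (image f) (Kn_edges m)"
proof (rule inj_on_subset)
  show "inj_on (image f) (Pow {0..<m})"
    using assms by (rule inj_on_image_Pow)
  show "Kn_edges m \<subseteq> Pow {0..<m}"
    unfolding Kn_edges_def by auto
qed

lemma image_free_edges_insert:
  assumes "inj_on f {0..<m}" "e1 \<in> free_edges m R0 B0" "e2 \<in> free_edges m R0 B0"
    and "\<forall>e\<in>free_edges m R0 B0. f ` e \<in> free_edges n R B"
  shows "\<forall>e\<in>free_edges m (insert e1 R0) (insert e2 B0).
           f ` e \<in> free_edges n (insert (f ` e1) R) (insert (f ` e2) B)"
proof
  fix e assume "e \<in> free_edges m (insert e1 R0) (insert e2 B0)"
  then have e: "e \<in> free_edges m R0 B0" "e \<noteq> e1" "e \<noteq> e2"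
    by (auto simp: free_edges_insert)
  have "f ` e \<noteq> f ` e1" "f ` e \<noteq> f ` e2"
    using e assms(2,3) inj_on_image_Kn_edges[OF assms(1)] free_edges_subset
    by (metis inj_onD subsetD)+
  then show "f ` e \<in> free_edges n (insert (f ` e1) R) (insert (f ` e2) B)"
    using e(1) assms(4) by (simp add: free_edges_insert)
qed

(* Waiter plays the images of the edges offered by the strategy on K_m. The goal Q may rely on
   red edges outside the copy, hence the hypothesis R \<subseteq> S' in the transfer condition. *)
lemma waiter_forces_embed:
  assumes "waiter_forces m P k R0 B0" "inj_on f {0..<m}"
    and "\<forall>e\<in>R0. f ` e \<in> R" "\<forall>e\<in>free_edges m R0 B0. f ` e \<in> free_edges n R B"
    and "\<And>S S'. P S \<Longrightarrow> \<forall>e\<in>S. f ` e \<in> S' \<Longrightarrow> R \<subseteq> S' \<Longrightarrow> Q S'"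
  shows "waiter_forces n Q k R B"
  using assms(1,3-5)
proof (induction k arbitrary: R0 B0 R B)
  case 0
  then show ?case by auto
next
  case (Suc k)
  show ?case
  proof (cases "P R0")
    case True
    then show ?thesis
      using Suc.prems(2,4) by (auto intro: waiter_forces_if_holds)
  next
    case False
    then obtain e1 e2 where e12: "e1 \<noteq> e2" "e1 \<in> free_edges m R0 B0" "e2 \<in> free_edges m R0 B0"
      and win1: "waiter_forces m P k (insert e1 R0) (insert e2 B0)"
      and win2: "waiter_forces m P k (insert e2 R0) (insert e1 B0)"
      using Suc.prems(1) by auto
    have "f ` e1 \<noteq> f ` e2"
      using e12 inj_on_image_Kn_edges[OF assms(2)] free_edges_subset by (metis inj_onD subsetD)
    moreover have "f ` e1 \<in> free_edges n R B" "f ` e2 \<in> free_edges n R B"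
      using e12 Suc.prems(3) by auto
    moreover have "waiter_forces n Q k (insert (f ` e1) R) (insert (f ` e2) B)"
      using Suc.prems(2,4) by (intro Suc.IH[OF win1]
          image_free_edges_insert[OF assms(2) e12(2,3) Suc.prems(3)]) auto
    moreover have "waiter_forces n Q k (insert (f ` e2) R) (insert (f ` e1) B)"
      using Suc.prems(2,4) by (intro Suc.IH[OF win2]
          image_free_edges_insert[OF assms(2) e12(3,2) Suc.prems(3)]) auto
    ultimately show ?thesis
      by (subst waiter_forces.simps(2)) blast
  qed
qed

(* Finite strategy trees for the game on K_m. A local edge {a, b} is encoded by the pair (a, b)
   with a < b, and a leaf records a red Hamilton path of K_m by its vertex sequence. *)
datatype strategy = Path "nat list" | Offer "nat \<times> nat" "nat \<times> nat" strategy strategy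

definition edge_of :: "nat \<times> nat \<Rightarrow> nat set" where
  "edge_of e = {fst e, snd e}"

definition pair_free :: "nat \<Rightarrow> (nat \<times> nat) list \<Rightarrow> (nat \<times> nat) list \<Rightarrow> nat \<times> nat \<Rightarrow> bool" where
  "pair_free m Rl Bl e \<longleftrightarrow> fst e < snd e \<and> snd e < m \<and> e \<notin> set Rl \<and> e \<notin> set Bl"

fun strategy_wins ::
  "nat \<Rightarrow> nat \<Rightarrow> nat \<Rightarrow> (nat \<times> nat) list \<Rightarrow> (nat \<times> nat) list \<Rightarrow> nat \<Rightarrow> strategy \<Rightarrow> bool" where
  "strategy_wins m x y Rl Bl k (Path p) \<longleftrightarrow> sort p = [0..<m] \<and> hd p = x \<and> last p = y \<and>
     successively (\<lambda>a b. (min a b, max a b) \<in> set Rl) p"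
| "strategy_wins m x y Rl Bl 0 (Offer e1 e2 t1 t2) \<longleftrightarrow> False"
| "strategy_wins m x y Rl Bl (Suc k) (Offer e1 e2 t1 t2) \<longleftrightarrow>
     e1 \<noteq> e2 \<and> pair_free m Rl Bl e1 \<and> pair_free m Rl Bl e2 \<and>
     strategy_wins m x y (e1 # Rl) (e2 # Bl) k t1 \<and> strategy_wins m x y (e2 # Rl) (e1 # Bl) k t2"

lemma edge_of_inj:
  assumes "fst e < snd e" "fst e' < snd e'" "edge_of e = edge_of e'"
  shows "e = e'"
  using assms unfolding edge_of_def by (cases e, cases e') (auto simp: doubleton_eq_iff)

lemma edge_of_free_edges:
  assumes "pair_free m Rl Bl e" "\<forall>e'\<in>set Rl \<union> set Bl. fst e' < snd e'"
  shows "edge_of e \<in> free_edges m (edge_of ` set Rl) (edge_of ` set Bl)"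
proof -
  have "edge_of e \<in> Kn_edges m"
    using assms(1) unfolding pair_free_def edge_of_def Kn_edges_def
    by (intro CollectI exI conjI refl) auto
  moreover have "edge_of e \<notin> edge_of ` (set Rl \<union> set Bl)"
    using assms edge_of_inj unfolding pair_free_def by blast
  ultimately show ?thesis
    unfolding free_edges_def by auto
qed

lemma ham_path_between_if_Path_wins:
  assumes "strategy_wins m x y Rl Bl k (Path p)"
  shows "ham_path_between m (edge_of ` set Rl) x y"
  unfolding ham_path_between_iff
proof (intro exI conjI)
  have sorted: "sort p = [0..<m]"
    using assms by simp
  show "distinct p"
    using sorted by (metis distinct_sort distinct_upt)
  show "set p = {0..<m}"
    using sorted by (metis set_sort set_upt)
  show "hd p = x" "last p = y"
    using assms by simp_all
  have "edge_of (min a b, max a b) = {a, b}" for a b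
    unfolding edge_of_def by (auto simp: min_def max_def)
  then show "successively (\<lambda>a b. {a, b} \<in> edge_of ` set Rl) p"
    using assms by (auto elim!: successively_mono)
qed

lemma waiter_forces_if_strategy_wins:
  assumes "strategy_wins m x y Rl Bl k t" "\<forall>e\<in>set Rl \<union> set Bl. fst e < snd e"
  shows "waiter_forces m (\<lambda>R. ham_path_between m R x y) k (edge_of ` set Rl) (edge_of ` set Bl)"
  using assms
proof (induction t arbitrary: Rl Bl k)
  case (Path p)
  then show ?case
    by (intro waiter_forces_if_holds ham_path_between_if_Path_wins)
next
  case (Offer e1 e2 t1 t2)
  then obtain k' where k: "k = Suc k'"
    by (cases k) auto
  have ordered: "fst e1 < snd e1" "fst e2 < snd e2"
    using Offer.prems(1) unfolding k by (auto simp: pair_free_def)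
  have "edge_of e1 \<noteq> edge_of e2"
    using Offer.prems(1) edge_of_inj[OF ordered] unfolding k by auto
  moreover have "edge_of e1 \<in> free_edges m (edge_of ` set Rl) (edge_of ` set Bl)"
    "edge_of e2 \<in> free_edges m (edge_of ` set Rl) (edge_of ` set Bl)"
    using Offer.prems edge_of_free_edges unfolding k by auto
  moreover have "waiter_forces m (\<lambda>R. ham_path_between m R x y) k'
      (insert (edge_of e1) (edge_of ` set Rl)) (insert (edge_of e2) (edge_of ` set Bl))"
    using Offer.IH(1)[of "e1 # Rl" "e2 # Bl" k'] Offer.prems ordered unfolding k by auto
  moreover have "waiter_forces m (\<lambda>R. ham_path_between m R x y) k'
      (insert (edge_of e2) (edge_of ` set Rl)) (insert (edge_of e1) (edge_of ` set Bl))"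
    using Offer.IH(2)[of "e2 # Rl" "e1 # Bl" k'] Offer.prems ordered unfolding k by auto
  ultimately show ?case
    unfolding k by (subst waiter_forces.simps(2)) blast
qed

definition K8_strategy :: strategy where
  "K8_strategy =
    Offer (0,1) (0,2) (Offer (1,2) (1,3) (Offer (1,4) (1,5) (Offer (3,5) (3,6) (Offer (5,6) (6,7)
    (Offer (2,7) (4,7) (Offer (3,4) (4,6) (Offer (0,6) (2,6) (Path [0,6,5,3,4,1,2,7]) (Path
    [0,1,4,3,5,6,2,7])) (Offer (0,3) (2,3) (Path [0,3,5,6,4,1,2,7]) (Path [0,1,4,6,5,3,2,7])))
    (Offer (2,3) (2,6) (Offer (0,6) (4,6) (Path [0,6,5,3,2,1,4,7]) (Path [0,1,2,3,5,6,4,7]))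
    (Offer (0,3) (3,4) (Path [0,3,5,6,2,1,4,7]) (Path [0,1,2,6,5,3,4,7])))) (Offer (2,6) (4,6)
    (Offer (3,4) (4,5) (Offer (0,5) (2,5) (Path [0,5,3,4,1,2,6,7]) (Path [0,1,4,3,5,2,6,7]))
    (Offer (0,3) (2,3) (Path [0,3,5,4,1,2,6,7]) (Path [0,1,4,5,3,2,6,7]))) (Offer (2,3) (2,5)
    (Offer (0,5) (4,5) (Path [0,5,3,2,1,4,6,7]) (Path [0,1,2,3,5,4,6,7])) (Offer (0,3) (3,4)
    (Path [0,3,5,2,1,4,6,7]) (Path [0,1,2,5,3,4,6,7]))))) (Offer (5,6) (5,7) (Offer (2,7) (4,7)
    (Offer (4,5) (3,4) (Offer (0,3) (2,3) (Path [0,3,6,5,4,1,2,7]) (Path [0,1,4,5,6,3,2,7]))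
    (Offer (0,5) (2,5) (Path [0,5,6,3,4,1,2,7]) (Path [0,1,4,3,6,5,2,7]))) (Offer (2,3) (2,5)
    (Offer (0,5) (4,5) (Path [0,5,6,3,2,1,4,7]) (Path [0,1,2,3,6,5,4,7])) (Offer (0,3) (3,4)
    (Path [0,3,6,5,2,1,4,7]) (Path [0,1,2,5,6,3,4,7])))) (Offer (2,5) (4,5) (Offer (3,4) (4,6)
    (Offer (0,6) (2,6) (Path [0,6,3,4,1,2,5,7]) (Path [0,1,4,3,6,2,5,7])) (Offer (0,3) (2,3)
    (Path [0,3,6,4,1,2,5,7]) (Path [0,1,4,6,3,2,5,7]))) (Offer (2,3) (2,6) (Offer (0,6) (4,6)
    (Path [0,6,3,2,1,4,5,7]) (Path [0,1,2,3,6,4,5,7])) (Offer (0,3) (3,4) (Path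
    [0,3,6,2,1,4,5,7]) (Path [0,1,2,6,3,4,5,7])))))) (Offer (3,4) (3,6) (Offer (4,6) (6,7) (Offer
    (2,7) (5,7) (Offer (3,5) (5,6) (Offer (0,6) (2,6) (Path [0,6,4,3,5,1,2,7]) (Path
    [0,1,5,3,4,6,2,7])) (Offer (0,3) (2,3) (Path [0,3,4,6,5,1,2,7]) (Path [0,1,5,6,4,3,2,7])))
    (Offer (2,3) (2,6) (Offer (0,6) (5,6) (Path [0,6,4,3,2,1,5,7]) (Path [0,1,2,3,4,6,5,7]))
    (Offer (0,3) (3,5) (Path [0,3,4,6,2,1,5,7]) (Path [0,1,2,6,4,3,5,7])))) (Offer (2,6) (5,6)
    (Offer (3,5) (4,5) (Offer (0,4) (2,4) (Path [0,4,3,5,1,2,6,7]) (Path [0,1,5,3,4,2,6,7]))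
    (Offer (0,3) (2,3) (Path [0,3,4,5,1,2,6,7]) (Path [0,1,5,4,3,2,6,7]))) (Offer (2,3) (2,4)
    (Offer (0,4) (4,5) (Path [0,4,3,2,1,5,6,7]) (Path [0,1,2,3,4,5,6,7])) (Offer (0,3) (3,5)
    (Path [0,3,4,2,1,5,6,7]) (Path [0,1,2,4,3,5,6,7]))))) (Offer (4,6) (4,7) (Offer (2,7) (5,7)
    (Offer (4,5) (3,5) (Offer (0,3) (2,3) (Path [0,3,6,4,5,1,2,7]) (Path [0,1,5,4,6,3,2,7]))
    (Offer (0,4) (2,4) (Path [0,4,6,3,5,1,2,7]) (Path [0,1,5,3,6,4,2,7]))) (Offer (2,3) (2,4)
    (Offer (0,4) (4,5) (Path [0,4,6,3,2,1,5,7]) (Path [0,1,2,3,6,4,5,7])) (Offer (0,3) (3,5)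
    (Path [0,3,6,4,2,1,5,7]) (Path [0,1,2,4,6,3,5,7])))) (Offer (2,4) (4,5) (Offer (3,5) (5,6)
    (Offer (0,6) (2,6) (Path [0,6,3,5,1,2,4,7]) (Path [0,1,5,3,6,2,4,7])) (Offer (0,3) (2,3)
    (Path [0,3,6,5,1,2,4,7]) (Path [0,1,5,6,3,2,4,7]))) (Offer (2,3) (2,6) (Offer (0,6) (5,6)
    (Path [0,6,3,2,1,5,4,7]) (Path [0,1,2,3,6,5,4,7])) (Offer (0,3) (3,5) (Path
    [0,3,6,2,1,5,4,7]) (Path [0,1,2,6,3,5,4,7]))))))) (Offer (2,4) (2,5) (Offer (1,5) (4,5)
    (Offer (2,6) (4,6) (Offer (3,4) (4,7) (Offer (5,6) (6,7) (Offer (5,7) (3,7) (Path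
    [0,1,3,4,2,6,5,7]) (Path [0,1,5,6,2,4,3,7])) (Offer (0,5) (3,5) (Path [0,5,1,3,4,2,6,7])
    (Path [0,1,5,3,4,2,6,7]))) (Offer (3,6) (5,6) (Offer (0,5) (3,5) (Path [0,5,1,3,6,2,4,7])
    (Path [0,1,5,3,6,2,4,7])) (Offer (0,3) (3,5) (Path [0,3,1,5,6,2,4,7]) (Path
    [0,1,3,5,6,2,4,7])))) (Offer (2,3) (2,7) (Offer (5,6) (6,7) (Offer (5,7) (3,7) (Path
    [0,1,3,2,4,6,5,7]) (Path [0,1,5,6,4,2,3,7])) (Offer (0,5) (3,5) (Path [0,5,1,3,2,4,6,7])
    (Path [0,1,5,3,2,4,6,7]))) (Offer (5,6) (3,6) (Offer (0,3) (3,5) (Path [0,3,1,5,6,4,2,7])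
    (Path [0,1,3,5,6,4,2,7])) (Offer (0,5) (3,5) (Path [0,5,1,3,6,4,2,7]) (Path
    [0,1,5,3,6,4,2,7]))))) (Offer (2,3) (3,5) (Offer (5,6) (5,7) (Offer (0,6) (1,6) (Offer (6,7)
    (1,7) (Path [0,1,3,2,4,5,6,7]) (Path [0,6,5,4,2,3,1,7])) (Offer (3,7) (6,7) (Path
    [0,1,6,5,4,2,3,7]) (Path [0,1,3,2,4,5,6,7]))) (Offer (1,6) (2,6) (Offer (0,6) (3,6) (Path
    [0,6,1,3,2,4,5,7]) (Path [0,1,6,3,2,4,5,7])) (Offer (3,6) (4,6) (Path [0,1,3,6,2,4,5,7])
    (Path [0,1,3,2,6,4,5,7])))) (Offer (2,6) (2,7) (Offer (0,6) (1,6) (Offer (1,7) (6,7) (Path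
    [0,6,2,4,5,3,1,7]) (Path [0,1,3,5,4,2,6,7])) (Offer (3,7) (6,7) (Path [0,1,6,2,4,5,3,7])
    (Path [0,1,3,5,4,2,6,7]))) (Offer (1,6) (5,6) (Offer (0,6) (3,6) (Path [0,6,1,3,5,4,2,7])
    (Path [0,1,6,3,5,4,2,7])) (Offer (3,6) (4,6) (Path [0,1,3,6,5,4,2,7]) (Path
    [0,1,3,5,6,4,2,7])))))) (Offer (1,4) (4,5) (Offer (2,6) (5,6) (Offer (3,5) (5,7) (Offer (4,6)
    (6,7) (Offer (4,7) (3,7) (Path [0,1,3,5,2,6,4,7]) (Path [0,1,4,6,2,5,3,7])) (Offer (0,4)
    (3,4) (Path [0,4,1,3,5,2,6,7]) (Path [0,1,4,3,5,2,6,7]))) (Offer (3,6) (4,6) (Offer (0,4)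
    (3,4) (Path [0,4,1,3,6,2,5,7]) (Path [0,1,4,3,6,2,5,7])) (Offer (0,3) (3,4) (Path
    [0,3,1,4,6,2,5,7]) (Path [0,1,3,4,6,2,5,7])))) (Offer (2,3) (2,7) (Offer (4,6) (6,7) (Offer
    (4,7) (3,7) (Path [0,1,3,2,5,6,4,7]) (Path [0,1,4,6,5,2,3,7])) (Offer (0,4) (3,4) (Path
    [0,4,1,3,2,5,6,7]) (Path [0,1,4,3,2,5,6,7]))) (Offer (4,6) (3,6) (Offer (0,3) (3,4) (Path
    [0,3,1,4,6,5,2,7]) (Path [0,1,3,4,6,5,2,7])) (Offer (0,4) (3,4) (Path [0,4,1,3,6,5,2,7])
    (Path [0,1,4,3,6,5,2,7]))))) (Offer (2,3) (3,4) (Offer (4,6) (4,7) (Offer (0,6) (1,6) (Offer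
    (6,7) (1,7) (Path [0,1,3,2,5,4,6,7]) (Path [0,6,4,5,2,3,1,7])) (Offer (3,7) (6,7) (Path
    [0,1,6,4,5,2,3,7]) (Path [0,1,3,2,5,4,6,7]))) (Offer (1,6) (2,6) (Offer (0,6) (3,6) (Path
    [0,6,1,3,2,5,4,7]) (Path [0,1,6,3,2,5,4,7])) (Offer (3,6) (5,6) (Path [0,1,3,6,2,5,4,7])
    (Path [0,1,3,2,6,5,4,7])))) (Offer (2,6) (2,7) (Offer (0,6) (1,6) (Offer (1,7) (6,7) (Path
    [0,6,2,5,4,3,1,7]) (Path [0,1,3,4,5,2,6,7])) (Offer (3,7) (6,7) (Path [0,1,6,2,5,4,3,7])
    (Path [0,1,3,4,5,2,6,7]))) (Offer (1,6) (4,6) (Offer (0,6) (3,6) (Path [0,6,1,3,4,5,2,7])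
    (Path [0,1,6,3,4,5,2,7])) (Offer (3,6) (5,6) (Path [0,1,3,6,4,5,2,7]) (Path
    [0,1,3,4,6,5,2,7])))))))) (Offer (1,2) (2,3) (Offer (2,4) (2,5) (Offer (3,5) (3,6) (Offer
    (5,6) (6,7) (Offer (1,7) (4,7) (Offer (3,4) (4,6) (Offer (0,6) (1,6) (Path [0,6,5,3,4,2,1,7])
    (Path [0,2,4,3,5,6,1,7])) (Offer (0,3) (1,3) (Path [0,3,5,6,4,2,1,7]) (Path
    [0,2,4,6,5,3,1,7]))) (Offer (1,3) (1,6) (Offer (0,6) (4,6) (Path [0,6,5,3,1,2,4,7]) (Path
    [0,2,1,3,5,6,4,7])) (Offer (0,3) (3,4) (Path [0,3,5,6,1,2,4,7]) (Path [0,2,1,6,5,3,4,7]))))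
    (Offer (1,6) (4,6) (Offer (3,4) (4,5) (Offer (0,5) (1,5) (Path [0,5,3,4,2,1,6,7]) (Path
    [0,2,4,3,5,1,6,7])) (Offer (0,3) (1,3) (Path [0,3,5,4,2,1,6,7]) (Path [0,2,4,5,3,1,6,7])))
    (Offer (1,3) (1,5) (Offer (0,5) (4,5) (Path [0,5,3,1,2,4,6,7]) (Path [0,2,1,3,5,4,6,7]))
    (Offer (0,3) (3,4) (Path [0,3,5,1,2,4,6,7]) (Path [0,2,1,5,3,4,6,7]))))) (Offer (5,6) (5,7)
    (Offer (1,7) (4,7) (Offer (4,5) (3,4) (Offer (0,3) (1,3) (Path [0,3,6,5,4,2,1,7]) (Path
    [0,2,4,5,6,3,1,7])) (Offer (0,5) (1,5) (Path [0,5,6,3,4,2,1,7]) (Path [0,2,4,3,6,5,1,7])))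
    (Offer (1,3) (1,5) (Offer (0,5) (4,5) (Path [0,5,6,3,1,2,4,7]) (Path [0,2,1,3,6,5,4,7]))
    (Offer (0,3) (3,4) (Path [0,3,6,5,1,2,4,7]) (Path [0,2,1,5,6,3,4,7])))) (Offer (1,5) (4,5)
    (Offer (3,4) (4,6) (Offer (0,6) (1,6) (Path [0,6,3,4,2,1,5,7]) (Path [0,2,4,3,6,1,5,7]))
    (Offer (0,3) (1,3) (Path [0,3,6,4,2,1,5,7]) (Path [0,2,4,6,3,1,5,7]))) (Offer (1,3) (1,6)
    (Offer (0,6) (4,6) (Path [0,6,3,1,2,4,5,7]) (Path [0,2,1,3,6,4,5,7])) (Offer (0,3) (3,4)
    (Path [0,3,6,1,2,4,5,7]) (Path [0,2,1,6,3,4,5,7])))))) (Offer (3,4) (3,6) (Offer (4,6) (6,7)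
    (Offer (1,7) (5,7) (Offer (3,5) (5,6) (Offer (0,6) (1,6) (Path [0,6,4,3,5,2,1,7]) (Path
    [0,2,5,3,4,6,1,7])) (Offer (0,3) (1,3) (Path [0,3,4,6,5,2,1,7]) (Path [0,2,5,6,4,3,1,7])))
    (Offer (1,3) (1,6) (Offer (0,6) (5,6) (Path [0,6,4,3,1,2,5,7]) (Path [0,2,1,3,4,6,5,7]))
    (Offer (0,3) (3,5) (Path [0,3,4,6,1,2,5,7]) (Path [0,2,1,6,4,3,5,7])))) (Offer (1,6) (5,6)
    (Offer (3,5) (4,5) (Offer (0,4) (1,4) (Path [0,4,3,5,2,1,6,7]) (Path [0,2,5,3,4,1,6,7]))
    (Offer (0,3) (1,3) (Path [0,3,4,5,2,1,6,7]) (Path [0,2,5,4,3,1,6,7]))) (Offer (1,3) (1,4)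
    (Offer (0,4) (4,5) (Path [0,4,3,1,2,5,6,7]) (Path [0,2,1,3,4,5,6,7])) (Offer (0,3) (3,5)
    (Path [0,3,4,1,2,5,6,7]) (Path [0,2,1,4,3,5,6,7]))))) (Offer (4,6) (4,7) (Offer (1,7) (5,7)
    (Offer (4,5) (3,5) (Offer (0,3) (1,3) (Path [0,3,6,4,5,2,1,7]) (Path [0,2,5,4,6,3,1,7]))
    (Offer (0,4) (1,4) (Path [0,4,6,3,5,2,1,7]) (Path [0,2,5,3,6,4,1,7]))) (Offer (1,3) (1,4)
    (Offer (0,4) (4,5) (Path [0,4,6,3,1,2,5,7]) (Path [0,2,1,3,6,4,5,7])) (Offer (0,3) (3,5)
    (Path [0,3,6,4,1,2,5,7]) (Path [0,2,1,4,6,3,5,7])))) (Offer (1,4) (4,5) (Offer (3,5) (5,6)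
    (Offer (0,6) (1,6) (Path [0,6,3,5,2,1,4,7]) (Path [0,2,5,3,6,1,4,7])) (Offer (0,3) (1,3)
    (Path [0,3,6,5,2,1,4,7]) (Path [0,2,5,6,3,1,4,7]))) (Offer (1,3) (1,6) (Offer (0,6) (5,6)
    (Path [0,6,3,1,2,5,4,7]) (Path [0,2,1,3,6,5,4,7])) (Offer (0,3) (3,5) (Path
    [0,3,6,1,2,5,4,7]) (Path [0,2,1,6,3,5,4,7]))))))) (Offer (1,4) (1,5) (Offer (2,5) (4,5)
    (Offer (1,6) (4,6) (Offer (3,4) (4,7) (Offer (5,6) (6,7) (Offer (5,7) (3,7) (Path
    [0,2,3,4,1,6,5,7]) (Path [0,2,5,6,1,4,3,7])) (Offer (0,5) (3,5) (Path [0,5,2,3,4,1,6,7])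
    (Path [0,2,5,3,4,1,6,7]))) (Offer (3,6) (5,6) (Offer (0,5) (3,5) (Path [0,5,2,3,6,1,4,7])
    (Path [0,2,5,3,6,1,4,7])) (Offer (0,3) (3,5) (Path [0,3,2,5,6,1,4,7]) (Path
    [0,2,3,5,6,1,4,7])))) (Offer (1,3) (1,7) (Offer (5,6) (6,7) (Offer (5,7) (3,7) (Path
    [0,2,3,1,4,6,5,7]) (Path [0,2,5,6,4,1,3,7])) (Offer (0,5) (3,5) (Path [0,5,2,3,1,4,6,7])
    (Path [0,2,5,3,1,4,6,7]))) (Offer (5,6) (3,6) (Offer (0,3) (3,5) (Path [0,3,2,5,6,4,1,7])
    (Path [0,2,3,5,6,4,1,7])) (Offer (0,5) (3,5) (Path [0,5,2,3,6,4,1,7]) (Path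
    [0,2,5,3,6,4,1,7]))))) (Offer (1,3) (3,5) (Offer (5,6) (5,7) (Offer (0,6) (2,6) (Offer (6,7)
    (2,7) (Path [0,2,3,1,4,5,6,7]) (Path [0,6,5,4,1,3,2,7])) (Offer (3,7) (6,7) (Path
    [0,2,6,5,4,1,3,7]) (Path [0,2,3,1,4,5,6,7]))) (Offer (2,6) (1,6) (Offer (0,6) (3,6) (Path
    [0,6,2,3,1,4,5,7]) (Path [0,2,6,3,1,4,5,7])) (Offer (3,6) (4,6) (Path [0,2,3,6,1,4,5,7])
    (Path [0,2,3,1,6,4,5,7])))) (Offer (1,6) (1,7) (Offer (0,6) (2,6) (Offer (2,7) (6,7) (Path
    [0,6,1,4,5,3,2,7]) (Path [0,2,3,5,4,1,6,7])) (Offer (3,7) (6,7) (Path [0,2,6,1,4,5,3,7])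
    (Path [0,2,3,5,4,1,6,7]))) (Offer (2,6) (5,6) (Offer (0,6) (3,6) (Path [0,6,2,3,5,4,1,7])
    (Path [0,2,6,3,5,4,1,7])) (Offer (3,6) (4,6) (Path [0,2,3,6,5,4,1,7]) (Path
    [0,2,3,5,6,4,1,7])))))) (Offer (2,4) (4,5) (Offer (1,6) (5,6) (Offer (3,5) (5,7) (Offer (4,6)
    (6,7) (Offer (4,7) (3,7) (Path [0,2,3,5,1,6,4,7]) (Path [0,2,4,6,1,5,3,7])) (Offer (0,4)
    (3,4) (Path [0,4,2,3,5,1,6,7]) (Path [0,2,4,3,5,1,6,7]))) (Offer (3,6) (4,6) (Offer (0,4)
    (3,4) (Path [0,4,2,3,6,1,5,7]) (Path [0,2,4,3,6,1,5,7])) (Offer (0,3) (3,4) (Path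
    [0,3,2,4,6,1,5,7]) (Path [0,2,3,4,6,1,5,7])))) (Offer (1,3) (1,7) (Offer (4,6) (6,7) (Offer
    (4,7) (3,7) (Path [0,2,3,1,5,6,4,7]) (Path [0,2,4,6,5,1,3,7])) (Offer (0,4) (3,4) (Path
    [0,4,2,3,1,5,6,7]) (Path [0,2,4,3,1,5,6,7]))) (Offer (4,6) (3,6) (Offer (0,3) (3,4) (Path
    [0,3,2,4,6,5,1,7]) (Path [0,2,3,4,6,5,1,7])) (Offer (0,4) (3,4) (Path [0,4,2,3,6,5,1,7])
    (Path [0,2,4,3,6,5,1,7]))))) (Offer (1,3) (3,4) (Offer (4,6) (4,7) (Offer (0,6) (2,6) (Offer
    (6,7) (2,7) (Path [0,2,3,1,5,4,6,7]) (Path [0,6,4,5,1,3,2,7])) (Offer (3,7) (6,7) (Path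
    [0,2,6,4,5,1,3,7]) (Path [0,2,3,1,5,4,6,7]))) (Offer (2,6) (1,6) (Offer (0,6) (3,6) (Path
    [0,6,2,3,1,5,4,7]) (Path [0,2,6,3,1,5,4,7])) (Offer (3,6) (5,6) (Path [0,2,3,6,1,5,4,7])
    (Path [0,2,3,1,6,5,4,7])))) (Offer (1,6) (1,7) (Offer (0,6) (2,6) (Offer (2,7) (6,7) (Path
    [0,6,1,5,4,3,2,7]) (Path [0,2,3,4,5,1,6,7])) (Offer (3,7) (6,7) (Path [0,2,6,1,5,4,3,7])
    (Path [0,2,3,4,5,1,6,7]))) (Offer (2,6) (4,6) (Offer (0,6) (3,6) (Path [0,6,2,3,4,5,1,7])
    (Path [0,2,6,3,4,5,1,7])) (Offer (3,6) (5,6) (Path [0,2,3,6,4,5,1,7]) (Path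
    [0,2,3,4,6,5,1,7]))))))))"

lemma K8_strategy_wins: "strategy_wins 8 0 7 [] [] 8 K8_strategy"
  unfolding K8_strategy_def by code_simp

lemma waiter_forces_ham_path_K8: "waiter_forces 8 (\<lambda>R. ham_path_between 8 R 0 7) 8 {} {}"
  using waiter_forces_if_strategy_wins[OF K8_strategy_wins] by simp

lemma successively_map_edges:
  assumes "successively (\<lambda>a b. {a, b} \<in> S) qs" "\<forall>e\<in>S. f ` e \<in> S'"
  shows "successively (\<lambda>a b. {a, b} \<in> S') (map f qs)"
  unfolding successively_map using assms(1)
proof (rule successively_mono)
  fix a b assume "{a, b} \<in> S"
  then show "{f a, f b} \<in> S'"
    using assms(2) by force
qed

definition red_path_position ::
  "nat \<Rightarrow> nat set set \<Rightarrow> nat set set \<Rightarrow> nat list \<Rightarrow> nat \<Rightarrow> nat set \<Rightarrow> bool" where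
  "red_path_position n R B ps y W \<longleftrightarrow>
     distinct ps \<and> ps \<noteq> [] \<and> successively (\<lambda>a b. {a, b} \<in> R) ps \<and> y \<notin> W \<and>
     set ps \<inter> insert y W = {} \<and> set ps \<union> insert y W = {0..<n} \<and>
     uncoloured_on R B (insert (last ps) (insert y W))"

lemma red_path_position_last_notin:
  assumes "red_path_position n R B ps y W"
  shows "last ps \<notin> insert y W"
  using assms unfolding red_path_position_def by (metis disjoint_iff last_in_set)

lemma red_path_position_extend:
  assumes "red_path_position n R B ps y W" "a \<in> W"
  shows "red_path_position n (insert {last ps, a} R) (insert {last ps, b} B) (ps @ [a]) y (W - {a})"
proof -
  have "uncoloured_on (insert {last ps, a} R) (insert {last ps, b} B) (insert a (insert y (W - {a})))"
    using assms red_path_position_last_notin[OF assms(1)]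
    unfolding red_path_position_def uncoloured_on_def by (auto simp: doubleton_eq_iff)
  moreover have "successively (\<lambda>c d. {c, d} \<in> insert {last ps, a} R) (ps @ [a])"
    using assms(1) unfolding red_path_position_def
    by (auto simp: successively_append_iff elim: successively_mono)
  ultimately show ?thesis
    using assms unfolding red_path_position_def by auto
qed

lemma ham_path_between_through_copy:
  assumes pos: "red_path_position n R B ps y W"
    and L: "distinct L" "set L = insert (last ps) (insert y W)" "hd L = last ps" "last L = y"
    and path: "ham_path_between (length L) S 0 (length L - 1)"
    and S': "\<forall>e\<in>S. (!) L ` e \<in> S'" and "R \<subseteq> S'"
  shows "ham_path_between n S' (hd ps) y"
proof -
  obtain qs where qs: "distinct qs" "set qs = {0..<length L}" "hd qs = 0" "last qs = length L - 1"
    "successively (\<lambda>a b. {a, b} \<in> S) qs"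
    using path unfolding ham_path_between_iff by blast
  have "L \<noteq> []"
    using L(2) by auto
  then have "qs \<noteq> []"
    using qs(2) by auto
  define M where "M = map ((!) L) qs"
  have M_eq: "last ps # tl M = M"
    using \<open>qs \<noteq> []\<close> \<open>L \<noteq> []\<close> qs(3) L(3) unfolding M_def by (cases qs) (auto simp: hd_conv_nth)
  have last_M: "last M = y"
    using \<open>qs \<noteq> []\<close> \<open>L \<noteq> []\<close> qs(4) L(4) unfolding M_def by (simp add: last_map last_conv_nth)
  have "distinct M"
    using qs(1,2) L(1) unfolding M_def by (simp add: distinct_map inj_on_def nth_eq_iff_index_eq)
  moreover have "set M = set L"
    using qs(2) unfolding M_def by (simp add: nth_image)
  ultimately have "set (tl M) = insert y W"
    using L(2) red_path_position_last_notin[OF pos] M_eq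
    by (metis distinct.simps(2) insert_ident list.simps(15))
  have "ham_path_between n S' (hd ps) (last (last ps # tl M))"
  proof (rule ham_path_between_append)
    show "distinct (last ps # tl M)"
      using \<open>distinct M\<close> by (simp only: M_eq)
    show "set ps \<inter> set (tl M) = {}" "set ps \<union> set (tl M) = {0..<n}"
      using pos \<open>set (tl M) = insert y W\<close> unfolding red_path_position_def by simp_all
    show "successively (\<lambda>a b. {a, b} \<in> S') ps"
      using pos \<open>R \<subseteq> S'\<close> unfolding red_path_position_def by (auto elim: successively_mono)
    show "successively (\<lambda>a b. {a, b} \<in> S') (last ps # tl M)"
      unfolding M_eq unfolding M_def by (rule successively_map_edges[OF qs(5) S'])
  qed (use pos in \<open>auto simp: red_path_position_def\<close>)
  then show ?thesis
    using last_M by (simp only: M_eq)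
qed

lemma waiter_forces_finish_in_K8:
  assumes pos: "red_path_position n R B ps y W" and card_W: "card W = 6"
  shows "waiter_forces n (\<lambda>R. ham_path_between n R (hd ps) y) 8 R B"
proof -
  define L where "L = last ps # sorted_list_of_set W @ [y]"
  have "finite W"
    using card_W by (simp add: card_ge_0_finite)
  then have L: "distinct L" "length L = 8" "set L = insert (last ps) (insert y W)"
    "hd L = last ps" "last L = y"
    using pos red_path_position_last_notin[OF pos] card_W
    unfolding L_def red_path_position_def by auto
  have inj: "inj_on ((!) L) {0..<8}"
    using L(1,2) by (simp add: inj_on_def nth_eq_iff_index_eq)
  have L_range: "set L \<subseteq> {0..<n}"
    using pos L(3) unfolding red_path_position_def by (metis Un_upper2 insert_subset last_in_set Un_iff)
  have uncoloured: "uncoloured_on R B (set L)"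
    using pos L(3) unfolding red_path_position_def by simp
  show ?thesis
  proof (rule waiter_forces_embed[OF waiter_forces_ham_path_K8 inj])
    show "\<forall>e\<in>free_edges 8 {} {}. (!) L ` e \<in> free_edges n R B"
    proof
      fix e assume "e \<in> free_edges 8 {} {}"
      then obtain i j where "e = {i, j}" "i < 8" "j < 8" "i \<noteq> j"
        unfolding free_edges_def Kn_edges_def by blast
      moreover from this have "L ! i \<noteq> L ! j"
        using L(1,2) by (simp add: nth_eq_iff_index_eq)
      ultimately show "(!) L ` e \<in> free_edges n R B"
        using free_edges_if_uncoloured_on[OF uncoloured L_range] L(2) by simp
    qed
  next
    fix S S' assume "ham_path_between 8 S 0 7" "\<forall>e\<in>S. (!) L ` e \<in> S'" "R \<subseteq> S'"
    then show "ham_path_between n S' (hd ps) y"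
      using ham_path_between_through_copy[OF pos L(1,3-5)] L(2) by simp
  qed simp
qed

lemma waiter_forces_greedy_path:
  assumes "red_path_position n R B ps y W" "card W = m + 6"
  shows "waiter_forces n (\<lambda>R. ham_path_between n R (hd ps) y) (m + 8) R B"
  using assms
proof (induction m arbitrary: R B ps W)
  case 0
  then show ?case
    by (simp add: waiter_forces_finish_in_K8)
next
  case (Suc m)
  let ?v = "last ps" and ?Q = "\<lambda>R. ham_path_between n R (hd ps) y"
  have "2 \<le> card W"
    using Suc.prems(2) by simp
  then obtain a b where ab: "a \<in> W" "b \<in> W" "a \<noteq> b"
    by (auto simp: card_le_Suc_iff numeral_2_eq_2)
  have extend: "waiter_forces n ?Q (m + 8) (insert {?v, c} R) (insert {?v, d} B)"
    if "c \<in> W" "d \<in> W" "c \<noteq> d" for c d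
  proof -
    have "card (W - {c}) = m + 6"
      using Suc.prems(2) that(1) by (simp add: card_ge_0_finite)
    then show ?thesis
      using Suc.IH[OF red_path_position_extend[OF Suc.prems(1) that(1)]] Suc.prems(1)
      unfolding red_path_position_def by simp
  qed
  have "?v \<in> set ps" "set ps \<inter> insert y W = {}" "set ps \<union> insert y W = {0..<n}"
    and uncoloured: "uncoloured_on R B (insert ?v (insert y W))"
    using Suc.prems(1) unfolding red_path_position_def by auto
  then have "?v \<noteq> a" "?v \<noteq> b" "insert ?v (insert y W) \<subseteq> {0..<n}"
    using ab by auto
  then have "{?v, a} \<in> free_edges n R B" "{?v, b} \<in> free_edges n R B"
    using ab free_edges_if_uncoloured_on[OF uncoloured] by auto
  moreover have "{?v, a} \<noteq> {?v, b}"
    using ab by (auto simp: doubleton_eq_iff)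
  ultimately show ?case
    unfolding add_Suc waiter_forces.simps(2)
    by (intro disjI2 exI[of _ "{?v, a}"] exI[of _ "{?v, b}"] conjI extend) (use ab in auto)
qed

theorem lemma3p2:
  fixes n x y :: nat
  assumes "n \<ge> 8" and "x < n" and "y < n" and "x \<noteq> y"
  shows "waiter_forces n (\<lambda>R. ham_path_between n R x y) n {} {}"
proof -
  define W where "W = {0..<n} - {x, y}"
  have "red_path_position n {} {} [x] y W"
    using assms unfolding red_path_position_def uncoloured_on_def W_def by auto
  moreover have "card W = (n - 8) + 6"
    using assms unfolding W_def by (simp add: card_Diff_subset)
  ultimately have "waiter_forces n (\<lambda>R. ham_path_between n R x y) ((n - 8) + 8) {} {}"
    using waiter_forces_greedy_path by fastforce
  then show ?thesis
    using assms(1) by simp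
qed

end
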